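(* For all real $t\neq 0$, \[ \frac{\pi^2+\left(4-\frac{\pi^2}{3}\right)t^2-\left(\frac43-\frac{128}{\pi^4}\right)t^4}{\pi^2+4t^2}<\frac{\tanh t}{t}<\frac{\pi^2+\left(4-\frac{\pi^2}{3}\right)t^2-\left(\frac43-\frac{2\pi^2}{15}\right)t^4+\left(\frac{8}{15}-\frac{512}{\pi^6}\right)t^6}{\pi^2+4t^2}. \] *)

theory Defs
  imports Complex_Main
begin

end

theory Submission
  imports Defs "HOL-Analysis.Complex_Transcendental"
begin

text \<open>
  By evenness it suffices to take t > 0. Clearing denominators, the two inequalities say that
  (pi^2 + 4 t^2) sinh t - P(t) t cosh t has a definite sign, P being the respective numerator.
  Since t^j sinh t and t^j cosh t have the coefficient n(n-1)...(n-j+1)/n! at t^n, this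
  difference is an odd power series whose n-th coefficient is a polynomial in n divided by n!.
  After the substitution n = 7 + x (resp. n = 9 + x) that polynomial has nonnegative
  coefficients in x once pi >= 3.14159; the few smaller odd n are checked by hand, one of them
  giving a positive coefficient.
\<close>

definition falling_fact :: "real \<Rightarrow> nat \<Rightarrow> real" where
  "falling_fact x j = (\<Prod>i<j. x - of_nat i)"

lemma falling_fact_0 [simp]: "falling_fact x 0 = 1"
  by (simp add: falling_fact_def)

lemma falling_fact_Suc [simp]: "falling_fact x (Suc j) = falling_fact x j * (x - of_nat j)"
  by (simp add: falling_fact_def)

lemma falling_fact_of_nat_eq_0: "n < j \<Longrightarrow> falling_fact (of_nat n) j = 0"
  unfolding falling_fact_def by (intro prod_zero) (auto intro!: bexI[of _ n])

lemma fact_eq_falling_fact_mult_fact: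
  "j \<le> n \<Longrightarrow> fact n = falling_fact (of_nat n) j * fact (n - j)"
proof (induction j)
  case (Suc j)
  then have "n - j = Suc (n - Suc j)"
    by simp
  then have "fact (n - j) = (of_nat n - of_nat j) * (fact (n - Suc j) :: real)"
    using Suc.prems by (simp add: of_nat_diff)
  with Suc show ?case
    by simp
qed simp

definition odd_egf_term :: "(real \<Rightarrow> real) \<Rightarrow> real \<Rightarrow> nat \<Rightarrow> real" where
  "odd_egf_term c t n = (if odd n then c (of_nat n) / fact n else 0) * t ^ n"

lemma odd_egf_term_add: "odd_egf_term (\<lambda>x. c x + d x) t n = odd_egf_term c t n + odd_egf_term d t n"
  and odd_egf_term_diff: "odd_egf_term (\<lambda>x. c x - d x) t n = odd_egf_term c t n - odd_egf_term d t n"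
  and odd_egf_term_scale: "odd_egf_term (\<lambda>x. a * c x) t n = a * odd_egf_term c t n"
  by (simp_all add: odd_egf_term_def add_divide_distrib diff_divide_distrib algebra_simps)

lemma sums_mult_power_shift:
  fixes a :: "nat \<Rightarrow> real"
  assumes "(\<lambda>n. a n * t ^ n) sums S"
  shows "(\<lambda>n. (if j \<le> n then a (n - j) else 0) * t ^ n) sums (t ^ j * S)"
proof -
  let ?g = "\<lambda>n. (if j \<le> n then a (n - j) else 0) * t ^ n"
  have "(\<lambda>n. ?g (n + j)) = (\<lambda>n. t ^ j * (a n * t ^ n))"
    by (simp add: power_add mult_ac)
  then have "(\<lambda>n. ?g (n + j)) sums (t ^ j * S)"
    using sums_mult[OF assms] by simp
  moreover have "(\<Sum>n<j. ?g n) = 0"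
    by simp
  ultimately show ?thesis
    using sums_iff_shift[of ?g j] by simp
qed

lemma power_mult_odd_egf_sums:
  fixes t :: real
  assumes "(\<lambda>n. (if odd (n + j) then 1 / fact n else 0) * t ^ n) sums S"
  shows "odd_egf_term (\<lambda>x. falling_fact x j) t sums (t ^ j * S)"
proof -
  have "(if j \<le> n then (if odd (n - j + j) then 1 / fact (n - j) else 0) else 0)
      = (if odd n then falling_fact (of_nat n) j / fact n else 0)" for n
    using fact_eq_falling_fact_mult_fact[of j n] falling_fact_of_nat_eq_0[of n j]
    by (auto simp: field_simps)
  with sums_mult_power_shift[OF assms, of j] show ?thesis
    by (simp add: odd_egf_term_def[abs_def])
qed

lemma power_mult_sinh_sums:
  fixes t :: real
  assumes "even j"
  shows "odd_egf_term (\<lambda>x. falling_fact x j) t sums (t ^ j * sinh t)"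
proof -
  have "(\<lambda>n. (if odd (n + j) then 1 / fact n else 0) * t ^ n)
      = (\<lambda>n. if even n then 0 else t ^ n /\<^sub>R fact n)"
    using assms by (auto simp: fun_eq_iff divide_inverse)
  then show ?thesis
    using power_mult_odd_egf_sums[of j t "sinh t"] sinh_converges[of t] by simp
qed

lemma power_mult_cosh_sums:
  fixes t :: real
  assumes "odd j"
  shows "odd_egf_term (\<lambda>x. falling_fact x j) t sums (t ^ j * cosh t)"
proof -
  have "(\<lambda>n. (if odd (n + j) then 1 / fact n else 0) * t ^ n)
      = (\<lambda>n. if even n then t ^ n /\<^sub>R fact n else 0)"
    using assms by (auto simp: fun_eq_iff divide_inverse)
  then show ?thesis
    using power_mult_odd_egf_sums[of j t "cosh t"] cosh_converges[of t] by simp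
qed

lemma odd_egf_sum_pos:
  fixes t :: real
  assumes "odd_egf_term c t sums S" "t > 0"
    and "\<And>n. odd n \<Longrightarrow> c (of_nat n) \<ge> 0" "odd m" "c (of_nat m) > 0"
  shows "S > 0"
proof -
  have "0 < suminf (odd_egf_term c t)"
    using assms by (intro suminf_pos2[of _ m]) (auto simp: odd_egf_term_def sums_summable)
  with assms(1) show ?thesis
    by (simp add: sums_iff)
qed

text \<open>
  Here q, r, s stand for pi^2, 1/pi^4, 1/pi^6; only the rational bounds of
  \<open>pi_power_bounds\<close> are used for them.
\<close>

definition tanh_lower_coeff :: "real \<Rightarrow> real \<Rightarrow> real \<Rightarrow> real" where
  "tanh_lower_coeff q r x = q * falling_fact x 0 + 4 * falling_fact x 2 - q * falling_fact x 1
     - (4 - q/3) * falling_fact x 3 + (4/3 - 128 * r) * falling_fact x 5"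

lemma tanh_lower_series_sums:
  fixes t :: real
  shows "odd_egf_term (tanh_lower_coeff q r) t sums
    ((q + 4 * t^2) * sinh t - (q + (4 - q/3) * t^2 - (4/3 - 128 * r) * t^4) * (t * cosh t))"
    (is "_ sums ?S")
proof -
  have "odd_egf_term (tanh_lower_coeff q r) t sums
    (q * (t^0 * sinh t) + 4 * (t^2 * sinh t) - q * (t^1 * cosh t) - (4 - q/3) * (t^3 * cosh t)
       + (4/3 - 128 * r) * (t^5 * cosh t))"
    unfolding tanh_lower_coeff_def odd_egf_term_add odd_egf_term_diff odd_egf_term_scale
    by (intro sums_add sums_diff sums_mult power_mult_sinh_sums power_mult_cosh_sums) auto
  also have "\<dots> = ?S"
    by algebra
  finally show ?thesis .
qed

lemma tanh_lower_coeff_shift_7: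
  "tanh_lower_coeff q r (x + 7) =
     (2688 + 64*q - 322560*r) + (3296 + 104/3*q - 352512*r) * x + (4496/3 + 6*q - 150400*r) * x^2
     + (968/3 + q/3 - 31360*r) * x^3 + (100/3 - 3200*r) * x^4 + (4/3 - 128*r) * x^5"
  unfolding tanh_lower_coeff_def by (simp add: numeral_eq_Suc field_simps power_def)

lemma tanh_lower_coeff_small:
  "tanh_lower_coeff q r 1 = 0" "tanh_lower_coeff q r 3 = 0" "tanh_lower_coeff q r 5 = 16*q - 15360*r"
  unfolding tanh_lower_coeff_def by (simp_all add: numeral_eq_Suc field_simps)

lemma tanh_lower_coeff_nonneg:
  assumes q: "q \<ge> 98695/10000" and r: "r \<le> 10/974" and "odd n"
  shows "tanh_lower_coeff q r (of_nat n) \<ge> 0"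
proof (cases "n \<le> 5")
  case True
  with \<open>odd n\<close> have "n = 1 \<or> n = 3 \<or> n = 5"
    by presburger
  then show ?thesis
    using q r by (auto simp: tanh_lower_coeff_small)
next
  case False
  define x where "x = real n - 7"
  have "n \<ge> 7"
    using False \<open>odd n\<close> by presburger
  then have x: "x \<ge> 0" and n: "of_nat n = x + 7"
    unfolding x_def by simp_all
  have "0 \<le> 2688 + 64*q - 322560*r" "0 \<le> 3296 + 104/3*q - 352512*r" "0 \<le> 4496/3 + 6*q - 150400*r"
    "0 \<le> 968/3 + q/3 - 31360*r" "0 \<le> 100/3 - 3200*r" "0 \<le> 4/3 - 128*r"
    using q r by linarith+
  with x show ?thesis
    unfolding n tanh_lower_coeff_shift_7 by (intro add_nonneg_nonneg mult_nonneg_nonneg zero_le_power)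
qed

definition tanh_upper_coeff :: "real \<Rightarrow> real \<Rightarrow> real \<Rightarrow> real" where
  "tanh_upper_coeff q s x = q * falling_fact x 1 + (4 - q/3) * falling_fact x 3
     - (4/3 - 2*q/15) * falling_fact x 5 + (8/15 - 512 * s) * falling_fact x 7
     - q * falling_fact x 0 - 4 * falling_fact x 2"

lemma tanh_upper_series_sums:
  fixes t :: real
  shows "odd_egf_term (tanh_upper_coeff q s) t sums
    ((q + (4 - q/3) * t^2 - (4/3 - 2*q/15) * t^4 + (8/15 - 512 * s) * t^6) * (t * cosh t)
       - (q + 4 * t^2) * sinh t)"
    (is "_ sums ?S")
proof -
  have "odd_egf_term (tanh_upper_coeff q s) t sums
    (q * (t^1 * cosh t) + (4 - q/3) * (t^3 * cosh t) - (4/3 - 2*q/15) * (t^5 * cosh t)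
       + (8/15 - 512 * s) * (t^7 * cosh t) - q * (t^0 * sinh t) - 4 * (t^2 * sinh t))"
    unfolding tanh_upper_coeff_def odd_egf_term_add odd_egf_term_diff odd_egf_term_scale
    by (intro sums_add sums_diff sums_mult power_mult_sinh_sums power_mult_cosh_sums) auto
  also have "\<dots> = ?S"
    by algebra
  finally show ?thesis .
qed

lemma tanh_upper_coeff_shift_9:
  "tanh_upper_coeff q s (x + 9) =
     (78336 + 1856*q - 92897280 * s) + (571328/5 + 21608/15*q - 123457536 * s) * x
     + (1006384/15 + 1306/3*q - 68576256 * s) * x^2 + (313312/15 + 193/3*q - 20668928 * s) * x^3
     + (11284/3 + 14/3*q - 3655680 * s) * x^4 + (1972/5 + 2/15*q - 379904 * s) * x^5
     + (112/5 - 21504 * s) * x^6 + (8/15 - 512 * s) * x^7"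
  unfolding tanh_upper_coeff_def by (simp add: numeral_eq_Suc field_simps power_def)

lemma tanh_upper_coeff_small:
  "tanh_upper_coeff q s 1 = 0" "tanh_upper_coeff q s 3 = 0" "tanh_upper_coeff q s 5 = 0"
  "tanh_upper_coeff q s 7 = 272*q - 2580480 * s"
  unfolding tanh_upper_coeff_def by (simp_all add: numeral_eq_Suc field_simps)

lemma tanh_upper_coeff_nonneg:
  assumes q: "q \<ge> 98695/10000" and s: "s \<le> 100/96136" and "odd n"
  shows "tanh_upper_coeff q s (of_nat n) \<ge> 0"
proof (cases "n \<le> 7")
  case True
  with \<open>odd n\<close> have "n = 1 \<or> n = 3 \<or> n = 5 \<or> n = 7"
    by presburger
  then show ?thesis
    using q s by (auto simp: tanh_upper_coeff_small)
next
  case False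
  define x where "x = real n - 9"
  have "n \<ge> 9"
    using False \<open>odd n\<close> by presburger
  then have x: "x \<ge> 0" and n: "of_nat n = x + 9"
    unfolding x_def by simp_all
  have "0 \<le> 78336 + 1856*q - 92897280 * s" "0 \<le> 571328/5 + 21608/15*q - 123457536 * s"
    "0 \<le> 1006384/15 + 1306/3*q - 68576256 * s" "0 \<le> 313312/15 + 193/3*q - 20668928 * s"
    "0 \<le> 11284/3 + 14/3*q - 3655680 * s" "0 \<le> 1972/5 + 2/15*q - 379904 * s"
    "0 \<le> 112/5 - 21504 * s" "0 \<le> 8/15 - 512 * s"
    using q s by linarith+
  with x show ?thesis
    unfolding n tanh_upper_coeff_shift_9 by (intro add_nonneg_nonneg mult_nonneg_nonneg zero_le_power)
qed

lemma pi_power_bounds: "98695/10000 \<le> pi^2" "1/pi^4 \<le> 10/974" "1/pi^6 \<le> 100/96136"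
proof -
  have pi: "314159/100000 \<le> pi"
    using pi_approx(1) by simp
  have "(314159/100000)^2 \<le> pi^2" "(314159/100000)^4 \<le> pi^4" "(314159/100000)^6 \<le> pi^6"
    by (intro power_mono pi; simp)+
  moreover have "98695/10000 \<le> (314159/100000::real)^2" "974/10 \<le> (314159/100000::real)^4"
    "96136/100 \<le> (314159/100000::real)^6"
    by (simp_all add: power_divide)
  ultimately have "98695/10000 \<le> pi^2" "974/10 \<le> pi^4" "96136/100 \<le> pi^6"
    by linarith+
  then show "98695/10000 \<le> pi^2" "1/pi^4 \<le> 10/974" "1/pi^6 \<le> 100/96136"
    by (simp_all add: divide_simps)
qed

lemma less_tanh_div_iff:
  fixes t :: real
  assumes "t > 0" "D > 0"
  shows "A / D < tanh t / t \<longleftrightarrow> A * (t * cosh t) < D * sinh t"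
  using assms by (simp add: tanh_def field_simps)

lemma tanh_div_less_iff:
  fixes t :: real
  assumes "t > 0" "D > 0"
  shows "tanh t / t < B / D \<longleftrightarrow> D * sinh t < B * (t * cosh t)"
  using assms by (simp add: tanh_def field_simps)

lemma tanh_div_bounds_pos:
  fixes t :: real
  assumes t: "t > 0"
  shows "(pi^2 + (4 - pi^2/3) * t^2 - (4/3 - 128/pi^4) * t^4) / (pi^2 + 4*t^2) < tanh t / t
       \<and> tanh t / t < (pi^2 + (4 - pi^2/3) * t^2 - (4/3 - 2*pi^2/15) * t^4 + (8/15 - 512/pi^6) * t^6) / (pi^2 + 4*t^2)"
proof -
  define q r s where "q = pi^2" and "r = 1/pi^4" and "s = 1/pi^6"
  have q: "q \<ge> 98695/10000" and r: "r \<le> 10/974" and s: "s \<le> 100/96136"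
    using pi_power_bounds unfolding q_def r_def s_def by auto
  have D: "q + 4*t^2 > 0"
    using q by (simp add: add_pos_nonneg)
  have "0 < (q + 4 * t^2) * sinh t - (q + (4 - q/3) * t^2 - (4/3 - 128 * r) * t^4) * (t * cosh t)"
    using tanh_lower_series_sums t tanh_lower_coeff_nonneg[OF q r]
    by (rule odd_egf_sum_pos[of _ _ _ 5]) (use q r in \<open>simp_all add: tanh_lower_coeff_small\<close>)
  moreover have "0 < (q + (4 - q/3) * t^2 - (4/3 - 2*q/15) * t^4 + (8/15 - 512 * s) * t^6) * (t * cosh t)
       - (q + 4 * t^2) * sinh t"
    using tanh_upper_series_sums t tanh_upper_coeff_nonneg[OF q s]
    by (rule odd_egf_sum_pos[of _ _ _ 7]) (use q s in \<open>simp_all add: tanh_upper_coeff_small\<close>)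
  ultimately show ?thesis
    using less_tanh_div_iff[OF t D] tanh_div_less_iff[OF t D] unfolding q_def r_def s_def by simp
qed

theorem mainTheorem16:
  fixes t :: real
  assumes "t \<noteq> 0"
  shows "(pi^2 + (4 - pi^2/3) * t^2 - (4/3 - 128/pi^4) * t^4) / (pi^2 + 4*t^2) < tanh t / t
       \<and> tanh t / t < (pi^2 + (4 - pi^2/3) * t^2 - (4/3 - 2*pi^2/15) * t^4 + (8/15 - 512/pi^6) * t^6) / (pi^2 + 4*t^2)"
proof (cases "t > 0")
  case True
  then show ?thesis
    by (rule tanh_div_bounds_pos)
next
  case False
  with assms have "-t > 0"
    by simp
  from tanh_div_bounds_pos[OF this] show ?thesis
    by simp
qed

end
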